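(* In the model described in the context, if the threshold satisfies $t\le f$ (i.e. $t$ records from distinct objects suffice to create an evidence), then the a-audit cannot satisfy weak accuracy.
   Context: Model. An asynchronous system has client processes (writers, readers, auditors) and $n$ storage objects $o_1,\dots,o_n$. Each $o_k$ is a loggable read/write register with a log $L_k$. Its rw-read() returns the stored block and appends $\langle p_r,\mathit{label}(b)\rangle$ to $L_k$, where $p_r$ is the reader and $\mathit{label}(b)$ identifies the value from which $b$ was derived; rw-getLog() returns $L_k$. A register over values $\mathbb{V}$ is emulated by information dispersal. An a-write($v$) stores block $b_{v_k}$ of $v$ at $o_k$, and any $\tau$ distinct blocks of $v$ recover $v$. Faults. At most $f$ storage objects are faulty, and a faulty object may, among other behaviours, report in its log records of read operations that never occurred (for arbitrary readers and values). Providing set $P_{p_r,v}$: the set of objects that received a write of $b_{v_k}$ and responded $b_{v_k}$ to a read request of $p_r$. Audit. An a-audit collects logs from an auditing quorum of $n-f$ objects and returns a set $E_A$ of evidences. An evidence $\mathcal{E}_{p_r,v}$ is created (and reported) once at least $t$ records $\langle p_r,\mathit{label}(v)\rangle$ from distinct objects are collected. Weak accuracy: for every correct reader $p_r$ that never invoked an a-read before the audit (so $P_{p_r,v}=\varnothing$), $\mathcal{E}_{p_r,v}\notin E_A$ for all $v$. *)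

theory Defs
  imports Main
begin

text \<open>Abstract model of the state of the system at the time an a-audit is executed.
  Storage objects are o_0, ..., o_(n-1) (indices below n).  A log record
  \<langle>p_r, label(v)\<rangle> is represented by the pair (p_r, v) (labels identify values).

  An execution (as seen by the audit) consists of
   - Rd : the set of readers that invoked an a-read before the audit,
   - Cr : the set of correct readers,
   - F  : the set of faulty storage objects,
   - P  : providing sets, P p v = objects that received a write of the block of v
          and responded that block to a read request of p,
   - L  : the logs, L k = set of records in the log of o_k.\<close>

definition admissible_exec ::
  "nat \<Rightarrow> nat \<Rightarrow> 'p set \<Rightarrow> nat set \<Rightarrow> ('p \<Rightarrow> 'v \<Rightarrow> nat set)
     \<Rightarrow> (nat \<Rightarrow> ('p \<times> 'v) set) \<Rightarrow> bool" where
  "admissible_exec n f Rd F P L \<longleftrightarrow>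
     F \<subseteq> {..<n} \<and> card F \<le> f \<and>
     (\<forall>p v. P p v \<subseteq> {..<n}) \<and>
     (\<forall>p v. p \<notin> Rd \<longrightarrow> P p v = {}) \<and>
     (\<forall>k<n. k \<notin> F \<longrightarrow> (\<forall>p v. (p, v) \<in> L k \<longrightarrow> k \<in> P p v))"
  \<comment> \<open>at most f faulty objects; a reader that never read has empty providing sets;
      a correct object only logs reads that actually occurred (and it served);
      faulty objects may report arbitrary records.\<close>

text \<open>Auditing quorum: any n - f storage objects (asynchrony lets the scheduler decide
  which objects respond first).\<close>
definition audit_quorum :: "nat \<Rightarrow> nat \<Rightarrow> nat set \<Rightarrow> bool" where
  "audit_quorum n f Q \<longleftrightarrow> Q \<subseteq> {..<n} \<and> card Q = n - f"

definition audit_evidences :: "nat \<Rightarrow> nat set \<Rightarrow> (nat \<Rightarrow> ('p \<times> 'v) set) \<Rightarrow> ('p \<times> 'v) set" where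
  "audit_evidences t Q L = {(p, v). t \<le> card {k \<in> Q. (p, v) \<in> L k}}"

definition weak_accuracy :: "nat \<Rightarrow> nat \<Rightarrow> nat \<Rightarrow> 'p itself \<Rightarrow> 'v itself \<Rightarrow> bool" where
  "weak_accuracy n f t (_ :: 'p itself) (_ :: 'v itself) \<longleftrightarrow>
     (\<forall>(Rd :: 'p set) (Cr :: 'p set) F (P :: 'p \<Rightarrow> 'v \<Rightarrow> nat set) L Q.
        admissible_exec n f Rd F P L \<and> audit_quorum n f Q \<longrightarrow>
        (\<forall>p v. p \<in> Cr \<and> p \<notin> Rd \<longrightarrow> (p, v) \<notin> audit_evidences t Q L))"

end

theory Submission
  imports Defs
begin

text \<open>With t \<le> f the faulty objects alone can produce an evidence. Let o_0, ..., o_(f-1) be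
  faulty and log a read of every value by every reader, while nobody ever reads. Since
  f < n - f, the scheduler may let the auditing quorum o_0, ..., o_(n-f-1) answer first; it
  contains all f forging objects, so the audit reports evidence against readers that never read.\<close>

definition forged_logs :: "nat \<Rightarrow> nat \<Rightarrow> ('p \<times> 'v) set" where
  "forged_logs f k = (if k < f then UNIV else {})"

lemma admissible_exec_forged_logs:
  assumes "f \<le> n"
  shows "admissible_exec n f {} {..<f} (\<lambda>_ _. {}) (forged_logs f)"
  using assms unfolding admissible_exec_def forged_logs_def by auto

lemma audit_quorum_lessThan: "audit_quorum n f {..<n - f}"
  unfolding audit_quorum_def by simp

lemma audit_evidences_forged_logs:
  assumes "{..<f} \<subseteq> Q" and "t \<le> f"
  shows "(p, v) \<in> audit_evidences t Q (forged_logs f)"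
proof -
  have "{k \<in> Q. (p, v) \<in> forged_logs f k} = {..<f}"
    using assms(1) unfolding forged_logs_def by auto
  then show ?thesis
    using assms(2) unfolding audit_evidences_def by simp
qed

theorem lemma3:
  fixes n f t :: nat
  assumes "2 * f < n"
    and "t \<le> f"
  shows "\<not> weak_accuracy n f t TYPE('p) TYPE('v)"
proof
  assume "weak_accuracy n f t TYPE('p) TYPE('v)"
  moreover have "admissible_exec n f ({} :: 'p set) {..<f} (\<lambda>_ _. {}) (forged_logs f)"
    using assms(1) by (intro admissible_exec_forged_logs) simp
  moreover have "audit_quorum n f {..<n - f}"
    by (rule audit_quorum_lessThan)
  ultimately have "(p, v) \<notin> audit_evidences t {..<n - f} (forged_logs f)"
    for p :: 'p and v :: 'v
    unfolding weak_accuracy_def by blast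
  moreover have "(p, v) \<in> audit_evidences t {..<n - f} (forged_logs f)"
    for p :: 'p and v :: 'v
    using assms by (intro audit_evidences_forged_logs) auto
  ultimately show False by blast
qed

end
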